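(* Let $\vartheta\in\mathbb R^d$, $X\sim\mathcal N(\vartheta,I_d/\lambda)$ with $\lambda>0$, $v\in\mathbb R^K$ and $W\in\mathbb R^{K\times d}$. Then $$\mathbb E\big[(\sigma(v\cdot g(WX))^2-\sigma(v\cdot g(W\vartheta))^2)^2\big]\vee\mathbb E\big[(\sigma'(v\cdot g(WX))-\sigma'(v\cdot g(W\vartheta)))^2\big]\le C_K\,\psi_3\Big(\frac1\lambda\|v\|^2\|W\|_F^2\Big),$$ where $\psi_3(x)=x(1+x)$ and $C_K$ depends only on $K$.
   Context: $g(t)=\max(t,0)$ is ReLU applied entrywise, $\sigma(t)=1/(1+e^{-t})$ is the sigmoid, $\|\cdot\|_F$ is the Frobenius norm, and $a\vee b=\max(a,b)$. *)

theory Defs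
  imports "HOL-Probability.Probability"
begin

definition sigmoid :: "real \<Rightarrow> real" where
  "sigmoid t = 1 / (1 + exp (- t))"

definition relu :: "real \<Rightarrow> real" where
  "relu t = max t 0"

text \<open>Gaussian N(theta, I_d / lambda) on R^d, vectors represented as nat => real
  with coordinates 0..d-1: product of independent N(theta_i, 1/lambda).\<close>
definition gauss_iso :: "nat \<Rightarrow> (nat \<Rightarrow> real) \<Rightarrow> real \<Rightarrow> (nat \<Rightarrow> real) measure" where
  "gauss_iso d \<theta> lam = PiM {..<d} (\<lambda>i. density lborel (normal_density (\<theta> i) (1 / sqrt lam)))"

definition net :: "nat \<Rightarrow> nat \<Rightarrow> (nat \<Rightarrow> real) \<Rightarrow> (nat \<Rightarrow> nat \<Rightarrow> real) \<Rightarrow> (nat \<Rightarrow> real) \<Rightarrow> real" where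
  "net K d v W x = (\<Sum>k<K. v k * relu (\<Sum>j<d. W k j * x j))"

definition psi3 :: "real \<Rightarrow> real" where
  "psi3 x = x * (1 + x)"

end

theory Submission
  imports Defs
begin

text \<open>Both \<open>\<sigma>\<^sup>2\<close> and \<open>\<sigma>' = \<sigma> (1 - \<sigma>)\<close> are 1-Lipschitz, and by Cauchy-Schwarz and the
  1-Lipschitz ReLU, \<open>(v \<cdot> g(W x) - v \<cdot> g(W \<theta>))\<^sup>2 \<le> \<parallel>v\<parallel>\<^sup>2 \<parallel>W (x - \<theta>)\<parallel>\<^sup>2\<close>.
  Since the Gaussian has covariance \<open>I/\<lambda>\<close>, the expectation of \<open>\<parallel>W (X - \<theta>)\<parallel>\<^sup>2\<close> is
  \<open>\<parallel>W\<parallel>\<^sub>F\<^sup>2 / \<lambda>\<close>. Hence both expectations are at most \<open>x = \<parallel>v\<parallel>\<^sup>2 \<parallel>W\<parallel>\<^sub>F\<^sup>2 / \<lambda> \<le> \<psi>\<^sub>3(x)\<close>,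
  and the constant \<open>C\<^sub>K = 1\<close> works for every \<open>K\<close>.\<close>

lemma sigmoid_pos: "0 < sigmoid t"
  and sigmoid_less_1: "sigmoid t < 1"
  unfolding sigmoid_def by (auto simp: add_pos_pos)

lemma has_real_derivative_sigmoid:
  "(sigmoid has_real_derivative sigmoid t * (1 - sigmoid t)) (at t)"
proof -
  have "(sigmoid has_real_derivative exp (- t) / (1 + exp (- t))\<^sup>2) (at t)"
    unfolding sigmoid_def[abs_def]
    by (auto intro!: derivative_eq_intros simp: power2_eq_square add_pos_pos)
       (metis add_pos_pos exp_gt_zero zero_less_one less_irrefl)
  also have "exp (- t) / (1 + exp (- t))\<^sup>2 = sigmoid t * (1 - sigmoid t)"
    unfolding sigmoid_def by (simp add: divide_simps power2_eq_square add_pos_pos)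
  finally show ?thesis .
qed

lemma deriv_sigmoid: "deriv sigmoid t = sigmoid t * (1 - sigmoid t)"
  using has_real_derivative_sigmoid by (rule DERIV_imp_deriv)

lemma lipschitz_on_UNIV_if_deriv_bounded:
  fixes f :: "real \<Rightarrow> real"
  assumes "\<And>t. (f has_real_derivative f' t) (at t)" and "\<And>t. \<bar>f' t\<bar> \<le> L"
  shows "L-lipschitz_on UNIV f"
proof (rule lipschitz_onI)
  show "dist (f a) (f b) \<le> L * dist a b" for a b
  proof -
    have "norm (f a - f b) \<le> L * norm (a - b)"
      by (rule field_differentiable_bound[where S = UNIV]) (use assms in auto)
    then show ?thesis
      by (simp add: dist_norm)
  qed
  show "0 \<le> L"
    using assms(2) abs_ge_zero order_trans by blast
qed

lemma sigmoid_mult_one_minus_le: "sigmoid t * (1 - sigmoid t) \<le> 1 / 4"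
proof -
  have "0 \<le> (sigmoid t - 1 / 2)\<^sup>2"
    by simp
  then show ?thesis
    by (simp add: power2_eq_square algebra_simps)
qed

lemma lipschitz_sigmoid_sq: "1-lipschitz_on UNIV (\<lambda>t. (sigmoid t)\<^sup>2)"
proof (rule lipschitz_on_UNIV_if_deriv_bounded)
  show "((\<lambda>t. (sigmoid t)\<^sup>2) has_real_derivative 2 * sigmoid t * (sigmoid t * (1 - sigmoid t))) (at t)"
    for t by (auto intro!: derivative_eq_intros has_real_derivative_sigmoid)
  show "\<bar>2 * sigmoid t * (sigmoid t * (1 - sigmoid t))\<bar> \<le> 1" for t
    using sigmoid_pos[of t] sigmoid_less_1[of t] sigmoid_mult_one_minus_le[of t]
      mult_mono[of "sigmoid t" 1 "sigmoid t * (1 - sigmoid t)" "1 / 4"]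
    by (simp add: abs_mult)
qed

lemma lipschitz_deriv_sigmoid: "1-lipschitz_on UNIV (deriv sigmoid)"
  unfolding deriv_sigmoid[abs_def]
proof (rule lipschitz_on_UNIV_if_deriv_bounded)
  show "((\<lambda>t. sigmoid t * (1 - sigmoid t)) has_real_derivative
      sigmoid t * (1 - sigmoid t) * (1 - 2 * sigmoid t)) (at t)" for t
    by (auto intro!: derivative_eq_intros has_real_derivative_sigmoid simp: algebra_simps)
  show "\<bar>sigmoid t * (1 - sigmoid t) * (1 - 2 * sigmoid t)\<bar> \<le> 1" for t
    using sigmoid_pos[of t] sigmoid_less_1[of t] sigmoid_mult_one_minus_le[of t]
    by (simp add: abs_mult mult_le_one)
qed

lemma abs_relu_diff_le: "\<bar>relu a - relu b\<bar> \<le> \<bar>a - b\<bar>"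
  unfolding relu_def by auto

lemma net_diff_sq_le:
  "(net K d v W x - net K d v W y)\<^sup>2
     \<le> (\<Sum>k<K. (v k)\<^sup>2) * (\<Sum>k<K. (\<Sum>j<d. W k j * (x j - y j))\<^sup>2)"
proof -
  let ?h = "\<lambda>k. relu (\<Sum>j<d. W k j * x j) - relu (\<Sum>j<d. W k j * y j)"
  have "net K d v W x - net K d v W y = (\<Sum>k<K. v k * ?h k)"
    unfolding net_def by (simp add: sum_subtractf right_diff_distrib)
  then have "(net K d v W x - net K d v W y)\<^sup>2 \<le> (\<Sum>k<K. (v k)\<^sup>2) * (\<Sum>k<K. (?h k)\<^sup>2)"
    using Cauchy_Schwarz_ineq_sum by simp
  also have "\<dots> \<le> (\<Sum>k<K. (v k)\<^sup>2) * (\<Sum>k<K. (\<Sum>j<d. W k j * (x j - y j))\<^sup>2)"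
  proof (intro mult_left_mono sum_mono sum_nonneg)
    fix k
    have "\<bar>?h k\<bar> \<le> \<bar>(\<Sum>j<d. W k j * x j) - (\<Sum>j<d. W k j * y j)\<bar>"
      by (rule abs_relu_diff_le)
    also have "\<dots> = \<bar>\<Sum>j<d. W k j * (x j - y j)\<bar>"
      by (simp add: sum_subtractf right_diff_distrib)
    finally show "(?h k)\<^sup>2 \<le> (\<Sum>j<d. W k j * (x j - y j))\<^sup>2"
      by (simp add: abs_le_square_iff)
  qed simp_all
  finally show ?thesis .
qed

lemma has_bochner_integral_normal_density_centered:
  "0 < \<sigma> \<Longrightarrow> has_bochner_integral (density lborel (normal_density \<mu> \<sigma>)) (\<lambda>x. x - \<mu>) 0"
  using normal_moment_odd[of \<sigma> \<mu> 0] by (intro has_bochner_integral_density) auto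

lemma has_bochner_integral_normal_density_centered_sq:
  "0 < \<sigma> \<Longrightarrow> has_bochner_integral (density lborel (normal_density \<mu> \<sigma>)) (\<lambda>x. (x - \<mu>)\<^sup>2) (\<sigma>\<^sup>2)"
  using normal_moment_even[of \<sigma> \<mu> 1] by (intro has_bochner_integral_density) (auto simp: numeral_2_eq_2)

lemma has_bochner_integral_normal_density_one:
  "0 < \<sigma> \<Longrightarrow> has_bochner_integral (density lborel (normal_density \<mu> \<sigma>)) (\<lambda>x. 1) (1::real)"
  by (intro has_bochner_integral_density) (auto simp: has_bochner_integral_iff)

lemma product_sigma_finite_normal_density:
  "(\<And>i. 0 < \<sigma> i) \<Longrightarrow> product_sigma_finite (\<lambda>i. density lborel (normal_density (\<mu> i) (\<sigma> i)))"
  unfolding product_sigma_finite_def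
  using prob_space_normal_density prob_space_imp_sigma_finite by blast

lemma (in product_sigma_finite) has_bochner_integral_PiM_prod:
  fixes f :: "'i \<Rightarrow> 'a \<Rightarrow> real"
  assumes "finite I" and "\<And>i. i \<in> I \<Longrightarrow> has_bochner_integral (M i) (f i) (c i)"
  shows "has_bochner_integral (Pi\<^sub>M I M) (\<lambda>x. \<Prod>i\<in>I. f i (x i)) (\<Prod>i\<in>I. c i)"
  using assms product_integrable_prod[of I f] product_integral_prod[of I f]
  by (simp add: has_bochner_integral_iff)

lemma has_bochner_integral_gauss_iso_covariance:
  assumes "0 < lam" and "i < d" and "j < d"
  shows "has_bochner_integral (gauss_iso d \<theta> lam)
    (\<lambda>x. (x i - \<theta> i) * (x j - \<theta> j)) (if i = j then 1 / lam else 0)"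
proof -
  define \<sigma> where "\<sigma> = 1 / sqrt lam"
  have \<sigma>: "0 < \<sigma>" "\<sigma>\<^sup>2 = 1 / lam"
    using \<open>0 < lam\<close> by (auto simp: \<sigma>_def power_divide)
  define N where "N l = density lborel (normal_density (\<theta> l) \<sigma>)" for l
  interpret product_sigma_finite N
    unfolding N_def using product_sigma_finite_normal_density[of "\<lambda>_. \<sigma>" \<theta>] \<sigma> by blast
  define f where "f = (\<lambda>l t. (if l = i then t - \<theta> l else 1) * (if l = j then t - \<theta> l else 1))"
  define c :: "nat \<Rightarrow> real"
    where "c l = (if l = i \<and> l = j then 1 / lam else if l = i \<or> l = j then 0 else 1)" for l
  have "has_bochner_integral (N l) (f l) (c l)" for l
    using has_bochner_integral_normal_density_one[OF \<sigma>(1), of "\<theta> l"]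
      has_bochner_integral_normal_density_centered[OF \<sigma>(1), of "\<theta> l"]
      has_bochner_integral_normal_density_centered_sq[OF \<sigma>(1), of "\<theta> l", unfolded \<sigma>(2)]
    by (auto simp: f_def c_def N_def power2_eq_square)
  then have "has_bochner_integral (Pi\<^sub>M {..<d} N) (\<lambda>x. \<Prod>l<d. f l (x l)) (\<Prod>l<d. c l)"
    by (intro has_bochner_integral_PiM_prod) auto
  moreover have "(\<Prod>l<d. f l (x l)) = (x i - \<theta> i) * (x j - \<theta> j)" for x
    unfolding f_def prod.distrib using assms by (simp add: prod.delta)
  moreover have "(\<Prod>l<d. c l) = (if i = j then 1 / lam else 0)"
    using assms by (cases "i = j") (auto simp: c_def prod.delta intro!: prod_zero cong: if_cong)
  ultimately show ?thesis
    unfolding gauss_iso_def N_def \<sigma>_def by simp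
qed

lemma has_bochner_integral_gauss_iso_linear_form_sq:
  assumes "0 < lam"
  shows "has_bochner_integral (gauss_iso d \<theta> lam)
    (\<lambda>x. (\<Sum>j<d. a j * (x j - \<theta> j))\<^sup>2) ((\<Sum>j<d. (a j)\<^sup>2) / lam)"
proof -
  have expand: "(\<Sum>j<d. a j * (x j - \<theta> j))\<^sup>2
      = (\<Sum>i<d. \<Sum>j<d. a i * a j * ((x i - \<theta> i) * (x j - \<theta> j)))" for x
    unfolding power2_eq_square sum_product by (simp add: ac_simps)
  have "has_bochner_integral (gauss_iso d \<theta> lam)
      (\<lambda>x. \<Sum>i<d. \<Sum>j<d. a i * a j * ((x i - \<theta> i) * (x j - \<theta> j)))
      (\<Sum>i<d. \<Sum>j<d. a i * a j * (if i = j then 1 / lam else 0))"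
    by (intro has_bochner_integral_sum has_bochner_integral_mult_right
        has_bochner_integral_gauss_iso_covariance assms) auto
  moreover have "(\<Sum>i<d. \<Sum>j<d. a i * a j * (if i = j then 1 / lam else 0)) = (\<Sum>j<d. (a j)\<^sup>2) / lam"
    by (simp add: if_distrib sum.delta sum_divide_distrib power2_eq_square cong: if_cong)
  ultimately show ?thesis
    unfolding expand by simp
qed

lemma integral_lipschitz_net_diff_sq_le:
  fixes f :: "real \<Rightarrow> real"
  assumes "0 < lam" and "L-lipschitz_on UNIV f"
  shows "(\<integral>x. (f (net K d v W x) - f (net K d v W \<theta>))\<^sup>2 \<partial>gauss_iso d \<theta> lam)
    \<le> L\<^sup>2 * ((1 / lam) * (\<Sum>k<K. (v k)\<^sup>2) * (\<Sum>k<K. \<Sum>j<d. (W k j)\<^sup>2))"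
proof -
  define V where "V = (\<Sum>k<K. (v k)\<^sup>2)"
  define B where "B x = L\<^sup>2 * (V * (\<Sum>k<K. (\<Sum>j<d. W k j * (x j - \<theta> j))\<^sup>2))" for x
  have B: "has_bochner_integral (gauss_iso d \<theta> lam) B (L\<^sup>2 * (V * (\<Sum>k<K. (\<Sum>j<d. (W k j)\<^sup>2) / lam)))"
    unfolding B_def[abs_def] by (intro has_bochner_integral_mult_right has_bochner_integral_sum
        has_bochner_integral_gauss_iso_linear_form_sq assms)
  have "0 \<le> V"
    unfolding V_def by (simp add: sum_nonneg)
  have "(f (net K d v W x) - f (net K d v W \<theta>))\<^sup>2 \<le> B x" for x
  proof -
    have "\<bar>f (net K d v W x) - f (net K d v W \<theta>)\<bar> \<le> L * \<bar>net K d v W x - net K d v W \<theta>\<bar>"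
      using lipschitz_on_normD[OF assms(2)] by simp
    then have "\<bar>f (net K d v W x) - f (net K d v W \<theta>)\<bar>\<^sup>2 \<le> (L * \<bar>net K d v W x - net K d v W \<theta>\<bar>)\<^sup>2"
      by (rule power_mono) simp
    then have "(f (net K d v W x) - f (net K d v W \<theta>))\<^sup>2 \<le> L\<^sup>2 * (net K d v W x - net K d v W \<theta>)\<^sup>2"
      by (simp add: power_mult_distrib)
    also have "\<dots> \<le> B x"
      unfolding B_def V_def by (intro mult_left_mono net_diff_sq_le) simp
    finally show ?thesis .
  qed
  moreover have "0 \<le> B x" for x
    unfolding B_def using \<open>0 \<le> V\<close> by (simp add: sum_nonneg)
  ultimately have "(\<integral>x. (f (net K d v W x) - f (net K d v W \<theta>))\<^sup>2 \<partial>gauss_iso d \<theta> lam)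
      \<le> integral\<^sup>L (gauss_iso d \<theta> lam) B"
    using B by (intro integral_mono') (auto simp: has_bochner_integral_iff)
  also have "\<dots> = L\<^sup>2 * ((1 / lam) * V * (\<Sum>k<K. \<Sum>j<d. (W k j)\<^sup>2))"
    using B by (simp add: has_bochner_integral_iff sum_divide_distrib[symmetric])
  finally show ?thesis
    unfolding V_def .
qed

lemma max_sigmoid_net_diff_integrals_le:
  assumes "0 < lam"
  shows "max (\<integral>x. ((sigmoid (net K d v W x))\<^sup>2 - (sigmoid (net K d v W \<theta>))\<^sup>2)\<^sup>2 \<partial>gauss_iso d \<theta> lam)
      (\<integral>x. (deriv sigmoid (net K d v W x) - deriv sigmoid (net K d v W \<theta>))\<^sup>2 \<partial>gauss_iso d \<theta> lam)
    \<le> (1 / lam) * (\<Sum>k<K. (v k)\<^sup>2) * (\<Sum>k<K. \<Sum>j<d. (W k j)\<^sup>2)"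
  using integral_lipschitz_net_diff_sq_le[OF assms lipschitz_sigmoid_sq]
    integral_lipschitz_net_diff_sq_le[OF assms lipschitz_deriv_sigmoid]
  by simp

lemma le_psi3: "0 \<le> x \<Longrightarrow> x \<le> psi3 x"
  unfolding psi3_def by (simp add: distrib_left)

theorem lemma4p3:
  fixes K :: nat
  shows "\<exists>C::real. \<forall>(d::nat) (\<theta>::nat \<Rightarrow> real) (lam::real) (v::nat \<Rightarrow> real) (W::nat \<Rightarrow> nat \<Rightarrow> real).
     lam > 0 \<longrightarrow>
     max (\<integral>x. ((sigmoid (net K d v W x))\<^sup>2 - (sigmoid (net K d v W \<theta>))\<^sup>2)\<^sup>2 \<partial>gauss_iso d \<theta> lam)
         (\<integral>x. (deriv sigmoid (net K d v W x) - deriv sigmoid (net K d v W \<theta>))\<^sup>2 \<partial>gauss_iso d \<theta> lam)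
     \<le> C * psi3 ((1 / lam) * (\<Sum>k<K. (v k)\<^sup>2) * (\<Sum>k<K. \<Sum>j<d. (W k j)\<^sup>2))"
  by (intro exI[of _ 1] allI impI order_trans[OF max_sigmoid_net_diff_integrals_le])
    (auto intro!: le_psi3 divide_nonneg_pos mult_nonneg_nonneg sum_nonneg)

end
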